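(* Suppose Assumptions (A1)–(A3) hold, $F$ is bounded below by $F_{\inf}$ (i.e. $F(\Theta)\ge F_{\inf}$ for all $\Theta$), and for every round $r$ and block $k\in\{0,\dots,K\}$ the step size satisfies $$\eta_k^r\le \frac{1}{16\,\tau_k^r\,\max\{L,L_k\}\,\max_{0\le t\le\tau_k^r-1}w_k^{r,t}}.$$ Let $W_k^r=\sum_{t=0}^{\tau_k^r-1}w_k^{r,t}$ and, for $R\ge1$, $S=\sum_{r=0}^{R-1}\sum_{k=0}^K\eta_k^rW_k^r$. Then the iterates of the algorithm run for $R$ rounds satisfy $$\frac1S\sum_{r=0}^{R-1}\sum_{k=0}^K\eta_k^rW_k^r\,\mathbb{E}\big[\|\nabla_kF(\Theta^{r,0})\|^2\big]\le \frac4S\big(F(\Theta^{0,0})-F_{\inf}\big)+\frac{4L}{S}\sum_{r=0}^{R-1}\sum_{k=0}^K(\eta_k^r)^2\,W_k^r\,\Big(\max_{0\le t\le\tau_k^r-1}w_k^{r,t}\Big)\,\tau_k^r\,\sigma_k^2,$$ where $\mathbb{E}$ is the total expectation over the mini-batches $\mathcal{B}^0,\dots,\mathcal{B}^{R-1}$.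
   Context: Setting. There are blocks $k=0,1,\dots,K$ (block $0$ is the server, blocks $1,\dots,K$ are parties). The global parameter is $\Theta=(\theta_0,\theta_1,\dots,\theta_K)\in\mathbb{R}^V$ with $\theta_k\in\mathbb{R}^{V_k}$, $V=\sum_k V_k$. There are $N$ data samples; for each $i\in\{1,\dots,N\}$ there is a differentiable loss $l_i:\mathbb{R}^V\to\mathbb{R}$. The objective is $F(\Theta)=\frac1N\sum_{i=1}^N l_i(\Theta)$, and $\nabla_kF$ denotes the partial gradient of $F$ with respect to the block $\theta_k$. For a mini-batch $\mathcal{B}\subseteq\{1,\dots,N\}$, the stochastic partial gradient is $g_k(\Theta;\mathcal{B})=\frac{1}{|\mathcal{B}|}\sum_{i\in\mathcal{B}}\nabla_{\theta_k}l_i(\Theta)$. Assumptions. (A1) Smoothness: there are constants $L<\infty$ and $L_k<\infty$ ($k=0,\dots,K$) such that for all $i$ and all $\Theta_1,\Theta_2\in\mathbb{R}^V$: $\|\nabla_\Theta l_i(\Theta_1)-\nabla_\Theta l_i(\Theta_2)\|\le L\|\Theta_1-\Theta_2\|$ and $\|\nabla_{\theta_k} l_i(\Theta_1)-\nabla_{\theta_k} l_i(\Theta_2)\|\le L_k\|\Theta_1-\Theta_2\|$. (A2) Unbiasedness: for a random mini-batch $\mathcal{B}$ (drawn as in the algorithm) and every fixed $\Theta$, $\mathbb{E}_{\mathcal{B}}[g_k(\Theta;\mathcal{B})]=\nabla_kF(\Theta)$ for all $k$. (A3) Bounded variance: there are constants $\sigma_k<\infty$ such that for every fixed $\Theta$,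 $\mathbb{E}_{\mathcal{B}}\|\nabla_kF(\Theta)-g_k(\Theta;\mathcal{B})\|^2\le\sigma_k^2$. Algorithm (Flex-VFL). Given deterministic positive integers $\tau_k^r\ge1$ (number of local iterations of block $k$ in round $r$), step sizes $\eta_k^r>0$, and weights $w_k^{r,t}\ge 1$, and an initial $\Theta^{0,0}$. In each round $r=0,1,\dots$, a mini-batch $\mathcal{B}^r$ is drawn at random, independently of $\mathcal{B}^0,\dots,\mathcal{B}^{r-1}$ (so that (A2), (A3) hold for $\mathcal{B}^r$ conditionally on the past). Write $\Theta^{r,0}=(\theta_0^{r,0},\dots,\theta_K^{r,0})$. For each block $k$ and $t=0,\dots,\tau_k^r-1$: let $\Gamma_k^{r,t}\in\mathbb{R}^V$ be the vector whose block $k$ equals $\theta_k^{r,t}$ and whose block $j\neq k$ equals $\theta_j^{r,0}$; set $g_k^{r,t}=g_k(\Gamma_k^{r,t};\mathcal{B}^r)$ and $\theta_k^{r,t+1}=\theta_k^{r,t}-\eta_k^r\,w_k^{r,t}\,g_k^{r,t}$. Then $\Theta^{r+1,0}=(\theta_0^{r,\tau_0^r},\dots,\theta_K^{r,\tau_K^r})$. In particular $\theta_k^{r,\tau_k^r}=\theta_k^{r,0}-\eta_k^r\sum_{t=0}^{\tau_k^r-1}w_k^{r,t}g_k^{r,t}$. *)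

theory Defs
  imports "HOL-Probability.Probability"
begin

text \<open>Blocks of coordinates: the parameter space is an abstract Euclidean space 'p,
whose orthonormal basis is partitioned into the blocks Bk 0, ..., Bk K.
blk Bk k x is the block-k component of x (orthogonal projection onto span (Bk k)).\<close>

definition blk :: "(nat \<Rightarrow> 'p::euclidean_space set) \<Rightarrow> nat \<Rightarrow> 'p \<Rightarrow> 'p" where
  "blk Bk k x = (\<Sum>b\<in>Bk k. (x \<bullet> b) *\<^sub>R b)"

text \<open>Stochastic partial gradient g_k(x;B) (embedded in the block-k coordinates);
gl i x is the full gradient of the loss l_i at x.\<close>

definition sgrad :: "(nat \<Rightarrow> 'p::euclidean_space set) \<Rightarrow> (nat \<Rightarrow> 'p \<Rightarrow> 'p) \<Rightarrow> nat \<Rightarrow> 'p \<Rightarrow> nat set \<Rightarrow> 'p" where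
  "sgrad Bk gl k x B = (1 / real (card B)) *\<^sub>R (\<Sum>i\<in>B. blk Bk k (gl i x))"

text \<open>Local iterates of block k within one round: local_iter ... t is Gamma_k^{r,t}
(block k = theta_k^{r,t}, the other blocks stay at Theta^{r,0}).\<close>

fun local_iter :: "(nat \<Rightarrow> 'p::euclidean_space set) \<Rightarrow> (nat \<Rightarrow> 'p \<Rightarrow> 'p) \<Rightarrow> real \<Rightarrow> (nat \<Rightarrow> real)
    \<Rightarrow> nat \<Rightarrow> nat set \<Rightarrow> 'p \<Rightarrow> nat \<Rightarrow> 'p" where
  "local_iter Bk gl eta w k B x 0 = x"
| "local_iter Bk gl eta w k B x (Suc t) =
     local_iter Bk gl eta w k B x t
       - (eta * w t) *\<^sub>R sgrad Bk gl k (local_iter Bk gl eta w k B x t) B"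

text \<open>One round of Flex-VFL with mini-batch B, starting from x = Theta^{r,0}.
Indices: eta k r, tau k r, w k r t.\<close>

definition flex_round :: "nat \<Rightarrow> (nat \<Rightarrow> 'p::euclidean_space set) \<Rightarrow> (nat \<Rightarrow> 'p \<Rightarrow> 'p)
    \<Rightarrow> (nat \<Rightarrow> nat \<Rightarrow> real) \<Rightarrow> (nat \<Rightarrow> nat \<Rightarrow> nat \<Rightarrow> real) \<Rightarrow> (nat \<Rightarrow> nat \<Rightarrow> nat)
    \<Rightarrow> nat \<Rightarrow> nat set \<Rightarrow> 'p \<Rightarrow> 'p" where
  "flex_round K Bk gl eta w tau r B x =
     (\<Sum>k\<le>K. blk Bk k (local_iter Bk gl (eta k r) (w k r) k B x (tau k r)))"

text \<open>Theta^{r,0} as a function of the mini-batch sequence bs (bs r = B^r).\<close>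

fun flex_iter :: "nat \<Rightarrow> (nat \<Rightarrow> 'p::euclidean_space set) \<Rightarrow> (nat \<Rightarrow> 'p \<Rightarrow> 'p)
    \<Rightarrow> (nat \<Rightarrow> nat \<Rightarrow> real) \<Rightarrow> (nat \<Rightarrow> nat \<Rightarrow> nat \<Rightarrow> real) \<Rightarrow> (nat \<Rightarrow> nat \<Rightarrow> nat)
    \<Rightarrow> 'p \<Rightarrow> (nat \<Rightarrow> nat set) \<Rightarrow> nat \<Rightarrow> 'p" where
  "flex_iter K Bk gl eta w tau x0 bs 0 = x0"
| "flex_iter K Bk gl eta w tau x0 bs (Suc r) =
     flex_round K Bk gl eta w tau r (bs r) (flex_iter K Bk gl eta w tau x0 bs r)"

end

theory Submission
  imports Defs
begin

text \<open>
  Fix a round and a party k and put c = L \<eta> wmax \<tau> \<le> 1/16. Along the \<tau> local steps the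
  iterate moves away from the start by at most 2 \<eta> wmax t |g|, so the whole local loop differs
  from the single step -\<eta> W g by at most a fraction 2c of its length. Because the blocks are
  orthogonal, the descent lemma for the L-smooth F splits into one term per block; inserting the
  local estimate and averaging over the unbiased mini-batch shows that one round decreases F in
  expectation by (1/4) \<Sum>k \<eta> W |\<nabla>k F|^2, up to the noise term L \<Sum>k \<eta>^2 W wmax \<tau> \<sigma>k^2.
  The iterate of round r does not depend on the mini-batch of round r, so this passes to the total
  expectation, and telescoping over the R rounds against F \<ge> Finf gives the claim.
\<close>

lemma linear_blk: "linear (blk Bk k)"
  unfolding blk_def
  by (rule linearI) (simp_all add: inner_add_left scaleR_add_left sum.distrib scaleR_sum_right)

lemmas blk_diff = linear_diff[OF linear_blk]
   and blk_sum = linear_sum[OF linear_blk]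

lemma inner_blk_Basis:
  assumes "Bk k \<subseteq> Basis" "b \<in> Basis"
  shows "blk Bk k y \<bullet> b = (if b \<in> Bk k then y \<bullet> b else 0)"
proof -
  have "finite (Bk k)" using assms finite_subset finite_Basis by blast
  moreover have "blk Bk k y \<bullet> b = (\<Sum>b'\<in>Bk k. if b' = b then y \<bullet> b else 0)"
    unfolding blk_def inner_sum_left using assms by (intro sum.cong) (auto simp: inner_Basis)
  ultimately show ?thesis by (simp add: sum.delta')
qed

lemma inner_blk_left:
  assumes "Bk k \<subseteq> Basis"
  shows "blk Bk k x \<bullet> y = (\<Sum>b\<in>Bk k. (x \<bullet> b) * (y \<bullet> b))"
proof -
  have "blk Bk k x \<bullet> y = (\<Sum>b\<in>Basis. if b \<in> Bk k then (x \<bullet> b) * (y \<bullet> b) else 0)"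
    using assms by (subst euclidean_inner) (auto simp: inner_blk_Basis intro: sum.cong)
  then show ?thesis
    using assms by (simp add: sum.inter_restrict[symmetric] Int_absorb1 Int_commute)
qed

lemma inner_blk_blk:
  assumes "Bk k \<subseteq> Basis"
  shows "blk Bk k x \<bullet> blk Bk k y = blk Bk k x \<bullet> y"
proof -
  have "(\<Sum>b\<in>Bk k. (x \<bullet> b) * (blk Bk k y \<bullet> b)) = (\<Sum>b\<in>Bk k. (x \<bullet> b) * (y \<bullet> b))"
    using assms by (intro sum.cong refl) (simp add: inner_blk_Basis[of Bk k, OF assms] subsetD[OF assms])
  then show ?thesis using assms by (simp add: inner_blk_left)
qed

lemma norm_blk_le:
  assumes "Bk k \<subseteq> Basis"
  shows "norm (blk Bk k x) \<le> norm x"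
proof -
  have "(norm (blk Bk k x))\<^sup>2 = blk Bk k x \<bullet> x"
    using assms by (simp add: power2_norm_eq_inner inner_blk_blk)
  also have "\<dots> = (\<Sum>b\<in>Bk k. (x \<bullet> b) * (x \<bullet> b))"
    using assms by (rule inner_blk_left)
  also have "\<dots> \<le> (\<Sum>b\<in>Basis. (x \<bullet> b) * (x \<bullet> b))"
    using assms by (intro sum_mono2) auto
  also have "\<dots> = (norm x)\<^sup>2"
    by (simp add: power2_norm_eq_inner euclidean_inner[of x x])
  finally show ?thesis using power2_le_imp_le by fastforce
qed

locale block_partition =
  fixes K :: nat and Bk :: "nat \<Rightarrow> 'p::euclidean_space set"
  assumes disjoint: "\<forall>k\<le>K. \<forall>j\<le>K. k \<noteq> j \<longrightarrow> Bk k \<inter> Bk j = {}"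
    and cover: "(\<Union>k\<le>K. Bk k) = Basis"
begin

lemma block_subset_Basis: "k \<le> K \<Longrightarrow> Bk k \<subseteq> Basis"
  using cover by blast

lemma finite_block: "k \<le> K \<Longrightarrow> finite (Bk k)"
  using block_subset_Basis finite_Basis finite_subset by blast

lemma inner_eq_sum_blk: "x \<bullet> y = (\<Sum>k\<le>K. blk Bk k x \<bullet> y)"
proof -
  have "(\<Sum>k\<le>K. blk Bk k x \<bullet> y) = (\<Sum>k\<le>K. \<Sum>b\<in>Bk k. (x \<bullet> b) * (y \<bullet> b))"
    by (intro sum.cong refl inner_blk_left block_subset_Basis) simp
  also have "\<dots> = (\<Sum>b\<in>(\<Union>k\<le>K. Bk k). (x \<bullet> b) * (y \<bullet> b))"
    using disjoint by (intro sum.UNION_disjoint[symmetric]) (auto simp: finite_block)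
  finally show ?thesis by (simp add: cover euclidean_inner[of x y])
qed

lemma blk_blk:
  assumes "j \<le> K" "k \<le> K"
  shows "blk Bk j (blk Bk k x) = (if j = k then blk Bk k x else 0)"
proof (rule euclidean_eqI)
  fix b :: 'p assume b: "b \<in> Basis"
  show "blk Bk j (blk Bk k x) \<bullet> b = (if j = k then blk Bk k x else 0) \<bullet> b"
    using inner_blk_Basis[of Bk j, OF block_subset_Basis[OF assms(1)] b]
      inner_blk_Basis[of Bk k, OF block_subset_Basis[OF assms(2)] b]
      disjoint[rule_format, OF assms] by auto
qed

lemma blk_sum_blk:
  assumes "k \<le> K"
  shows "blk Bk k (\<Sum>j\<le>K. blk Bk j (a j)) = blk Bk k (a k)"
proof -
  have "blk Bk k (\<Sum>j\<le>K. blk Bk j (a j)) = (\<Sum>j\<le>K. if k = j then blk Bk j (a j) else 0)"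
    unfolding blk_sum using assms by (intro sum.cong refl) (simp add: blk_blk)
  then show ?thesis using assms by simp
qed

lemma blk_blockwise_step:
  assumes "k \<le> K"
  shows "blk Bk k ((\<Sum>j\<le>K. blk Bk j (u j)) - x) = blk Bk k (u k - x)"
  using assms by (simp add: blk_diff blk_sum_blk)

lemma inner_blockwise_step:
  "v \<bullet> ((\<Sum>k\<le>K. blk Bk k (u k)) - x) = (\<Sum>k\<le>K. blk Bk k v \<bullet> (u k - x))"
proof -
  have "blk Bk k v \<bullet> ((\<Sum>j\<le>K. blk Bk j (u j)) - x) = blk Bk k v \<bullet> (u k - x)" if "k \<le> K" for k
    using inner_blk_blk[of Bk k, OF block_subset_Basis[OF that], of v] blk_blockwise_step[OF that, of u x]
    by metis
  then show ?thesis by (subst inner_eq_sum_blk) simp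
qed

lemma norm_blockwise_step_le:
  "(norm ((\<Sum>k\<le>K. blk Bk k (u k)) - x))\<^sup>2 \<le> (\<Sum>k\<le>K. (norm (u k - x))\<^sup>2)"
proof -
  have "(norm ((\<Sum>k\<le>K. blk Bk k (u k)) - x))\<^sup>2 = (\<Sum>k\<le>K. blk Bk k (u k - x) \<bullet> (u k - x))"
    unfolding power2_norm_eq_inner inner_blockwise_step
    by (intro sum.cong refl) (simp add: blk_blockwise_step)
  also have "\<dots> = (\<Sum>k\<le>K. (norm (blk Bk k (u k - x)))\<^sup>2)"
    by (simp add: power2_norm_eq_inner inner_blk_blk block_subset_Basis)
  also have "\<dots> \<le> (\<Sum>k\<le>K. (norm (u k - x))\<^sup>2)"
    by (intro sum_mono power_mono norm_blk_le block_subset_Basis) auto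
  finally show ?thesis .
qed

end

lemma average_has_derivative:
  assumes "\<forall>i\<in>A. \<forall>x. (l i has_derivative (\<lambda>h. gl i x \<bullet> h)) (at x)"
  shows "((\<lambda>x. (\<Sum>i\<in>A. l i x) / real n) has_derivative
           (\<lambda>h. ((1 / real n) *\<^sub>R (\<Sum>i\<in>A. gl i x)) \<bullet> h)) (at x)"
proof -
  have "((\<lambda>x. (\<Sum>i\<in>A. l i x) / real n) has_derivative (\<lambda>h. (\<Sum>i\<in>A. gl i x \<bullet> h) / real n)) (at x)"
    using assms by (cases "n = 0") (auto intro!: derivative_eq_intros)
  then show ?thesis
    by (rule has_derivative_eq_rhs) (auto simp: inner_sum_left)
qed

lemma average_lipschitz:
  fixes g :: "nat \<Rightarrow> 'a::real_normed_vector \<Rightarrow> 'b::real_normed_vector"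
  assumes "finite A" "A \<noteq> {}" "\<forall>i\<in>A. \<forall>x y. norm (g i x - g i y) \<le> L * norm (x - y)"
  shows "norm ((1 / real (card A)) *\<^sub>R (\<Sum>i\<in>A. g i x) - (1 / real (card A)) *\<^sub>R (\<Sum>i\<in>A. g i y))
           \<le> L * norm (x - y)"
proof -
  have "norm (\<Sum>i\<in>A. g i x - g i y) \<le> (\<Sum>i\<in>A. L * norm (x - y))"
    using assms(3) by (intro order_trans[OF norm_sum sum_mono]) auto
  then have "norm (\<Sum>i\<in>A. g i x - g i y) / real (card A) \<le> L * norm (x - y)"
    using assms(1,2) by (simp add: card_gt_0_iff divide_le_eq mult.commute)
  then show ?thesis by (simp add: sum_subtractf[symmetric] scaleR_diff_right[symmetric])
qed

lemma sgrad_lipschitz: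
  assumes "Bk k \<subseteq> Basis" "finite B" "B \<noteq> {}"
    and "\<forall>i\<in>B. \<forall>x y. norm (gl i x - gl i y) \<le> L * norm (x - y)"
  shows "norm (sgrad Bk gl k x B - sgrad Bk gl k y B) \<le> L * norm (x - y)"
proof -
  have "\<forall>i\<in>B. \<forall>x y. norm (blk Bk k (gl i x) - blk Bk k (gl i y)) \<le> L * norm (x - y)"
    using assms(4) norm_blk_le[of Bk k, OF assms(1)] by (metis blk_diff order_trans)
  then show ?thesis
    unfolding sgrad_def by (rule average_lipschitz[OF assms(2,3)])
qed

lemma lipschitz_constant_nonneg:
  fixes g :: "'a::euclidean_space \<Rightarrow> 'b::real_normed_vector"
  assumes "\<And>x y. norm (g x - g y) \<le> L * norm (x - y)"
  shows "0 \<le> L"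
proof -
  obtain b :: 'a where b: "b \<in> Basis" using nonempty_Basis by blast
  have "0 \<le> L * norm (b - 0)" using assms[of b 0] norm_ge_zero order_trans by blast
  with b show ?thesis by simp
qed

lemma descent_lemma:
  fixes f :: "'a::real_inner \<Rightarrow> real"
  assumes der: "\<And>x. (f has_derivative (\<lambda>h. g x \<bullet> h)) (at x)"
    and lip: "\<And>x y. norm (g x - g y) \<le> L * norm (x - y)"
  shows "f y \<le> f x + g x \<bullet> (y - x) + L / 2 * (norm (y - x))\<^sup>2"
proof -
  define h where "h = y - x"
  define \<phi> where "\<phi> t = f (x + t *\<^sub>R h) - t * (g x \<bullet> h) - L / 2 * t\<^sup>2 * (norm h)\<^sup>2" for t
  have \<phi>_deriv: "(\<phi> has_real_derivative (g (x + t *\<^sub>R h) \<bullet> h - g x \<bullet> h - L * t * (norm h)\<^sup>2)) (at t)"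
    for t
  proof -
    have "((\<lambda>t. x + t *\<^sub>R h) has_derivative (\<lambda>s. s *\<^sub>R h)) (at t)"
      by (auto intro!: derivative_eq_intros)
    from has_derivative_compose[OF this der]
    have "((\<lambda>t. f (x + t *\<^sub>R h)) has_real_derivative (g (x + t *\<^sub>R h) \<bullet> h)) (at t)"
      unfolding has_field_derivative_def
      by (rule has_derivative_eq_rhs) (auto simp: inner_scaleR_right mult.commute)
    then show ?thesis unfolding \<phi>_def
      by (auto intro!: derivative_eq_intros simp: power2_eq_square algebra_simps)
  qed
  have "\<phi> 1 \<le> \<phi> 0"
  proof (rule DERIV_nonpos_imp_nonincreasing[of 0 1 \<phi>])
    fix t :: real assume t: "0 \<le> t" "t \<le> 1"
    have "g (x + t *\<^sub>R h) \<bullet> h - g x \<bullet> h \<le> norm (g (x + t *\<^sub>R h) - g x) * norm h"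
      using norm_cauchy_schwarz by (metis inner_diff_left)
    also have "\<dots> \<le> (L * norm (t *\<^sub>R h)) * norm h"
      using lip[of "x + t *\<^sub>R h" x] by (intro mult_right_mono) auto
    also have "\<dots> = L * t * (norm h)\<^sup>2" using t by (simp add: power2_eq_square)
    finally show "\<exists>y. (\<phi> has_real_derivative y) (at t) \<and> y \<le> 0"
      using \<phi>_deriv by (intro exI conjI) auto
  qed simp
  then show ?thesis unfolding \<phi>_def h_def by simp
qed

locale local_iteration =
  fixes g :: "'a::real_inner \<Rightarrow> 'a" and L \<eta> wm :: real and w :: "nat \<Rightarrow> real" and \<tau> :: nat
    and x :: 'a and u :: "nat \<Rightarrow> 'a"
  assumes start: "u 0 = x"
    and step: "\<And>t. u (Suc t) = u t - (\<eta> * w t) *\<^sub>R g (u t)"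
    and lipschitz: "\<And>y z. norm (g y - g z) \<le> L * norm (y - z)"
    and L_nonneg: "0 \<le> L" and eta_nonneg: "0 \<le> \<eta>"
    and weights: "\<And>t. t < \<tau> \<Longrightarrow> 0 \<le> w t \<and> w t \<le> wm"
    and small_steps: "L * \<eta> * wm * real \<tau> \<le> 1/16"
begin

lemma drift_factor_mono:
  assumes "t \<le> \<tau>"
  shows "0 \<le> L * \<eta> * wm * real t \<and> L * \<eta> * wm * real t \<le> L * \<eta> * wm * real \<tau>"
proof (cases "\<tau> = 0")
  case False
  then have "0 \<le> L * \<eta> * wm"
    using weights[of 0] L_nonneg eta_nonneg by simp
  then show ?thesis
    using assms by (auto intro: mult_left_mono)
qed (use assms in auto)

lemma drift: "t \<le> \<tau> \<Longrightarrow> norm (u t - x) \<le> 2 * \<eta> * wm * real t * norm (g x)"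
proof (induction t)
  case (Suc t)
  then have t: "t < \<tau>" and IH: "norm (u t - x) \<le> 2 * \<eta> * wm * real t * norm (g x)" by auto
  have "L * norm (u t - x) \<le> 2 * norm (g x) * (L * \<eta> * wm * real t)"
    using mult_left_mono[OF IH L_nonneg] by (simp add: algebra_simps)
  also have "\<dots> \<le> norm (g x)"
  proof -
    have "L * \<eta> * wm * real t \<le> 1/16" using drift_factor_mono[of t] t small_steps by simp
    then have "2 * norm (g x) * (L * \<eta> * wm * real t) \<le> 2 * norm (g x) * (1/16)"
      by (rule mult_left_mono) simp
    then show ?thesis using norm_ge_zero[of "g x"] by linarith
  qed
  finally have g_bound: "norm (g (u t)) \<le> 2 * norm (g x)"
    using lipschitz[of "u t" x] norm_triangle_ineq2[of "g (u t)" "g x"] by linarith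
  have "norm (u (Suc t) - x) \<le> norm (u t - x) + \<eta> * w t * norm (g (u t))"
    using norm_triangle_ineq4[of "u t - x" "(\<eta> * w t) *\<^sub>R g (u t)"] weights[OF t] eta_nonneg
    by (simp add: step algebra_simps)
  also have "\<eta> * w t * norm (g (u t)) \<le> \<eta> * wm * (2 * norm (g x))"
    using weights[OF t] eta_nonneg g_bound by (intro mult_mono mult_left_mono) auto
  finally show ?case using IH by (simp add: algebra_simps)
qed (simp add: start)

lemma displacement:
  "norm ((u \<tau> - x) + (\<eta> * (\<Sum>t<\<tau>. w t)) *\<^sub>R g x)
     \<le> 2 * (L * \<eta> * wm * real \<tau>) * norm (g x) * (\<eta> * (\<Sum>t<\<tau>. w t))"
proof -
  have sum_form: "u t - x = - \<eta> *\<^sub>R (\<Sum>s<t. w s *\<^sub>R g (u s))" for t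
    by (induction t) (simp_all add: start step algebra_simps)
  have "(u \<tau> - x) + (\<eta> * (\<Sum>t<\<tau>. w t)) *\<^sub>R g x = - \<eta> *\<^sub>R (\<Sum>t<\<tau>. w t *\<^sub>R (g (u t) - g x))"
    by (simp add: sum_form scaleR_diff_right sum_subtractf scaleR_sum_left[symmetric])
  then have "norm ((u \<tau> - x) + (\<eta> * (\<Sum>t<\<tau>. w t)) *\<^sub>R g x)
      = \<eta> * norm (\<Sum>t<\<tau>. w t *\<^sub>R (g (u t) - g x))"
    using eta_nonneg by simp
  also have "\<dots> \<le> \<eta> * (\<Sum>t<\<tau>. norm (w t *\<^sub>R (g (u t) - g x)))"
    by (intro mult_left_mono norm_sum eta_nonneg)
  also have "\<dots> \<le> \<eta> * (\<Sum>t<\<tau>. w t * (2 * (L * \<eta> * wm * real \<tau>) * norm (g x)))"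
  proof (intro mult_left_mono sum_mono eta_nonneg)
    fix t assume "t \<in> {..<\<tau>}"
    then have t: "t < \<tau>" by simp
    have "norm (g (u t) - g x) \<le> L * (2 * \<eta> * wm * real t * norm (g x))"
      using lipschitz[of "u t" x] mult_left_mono[OF drift[of t] L_nonneg] t by linarith
    also have "\<dots> = 2 * norm (g x) * (L * \<eta> * wm * real t)" by simp
    also have "\<dots> \<le> 2 * norm (g x) * (L * \<eta> * wm * real \<tau>)"
      by (rule mult_left_mono) (use drift_factor_mono[of t] t in auto)
    finally have "w t * norm (g (u t) - g x) \<le> w t * (2 * norm (g x) * (L * \<eta> * wm * real \<tau>))"
      by (rule mult_left_mono) (use weights[OF t] in simp)
    then show "norm (w t *\<^sub>R (g (u t) - g x)) \<le> w t * (2 * (L * \<eta> * wm * real \<tau>) * norm (g x))"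
      using weights[OF t] by (simp add: mult_ac)
  qed
  also have "\<dots> = 2 * (L * \<eta> * wm * real \<tau>) * norm (g x) * (\<eta> * (\<Sum>t<\<tau>. w t))"
    by (simp add: sum_distrib_left sum_distrib_right mult_ac)
  finally show ?thesis .
qed

lemma local_descent:
  "G \<bullet> (u \<tau> - x) + L / 2 * (norm (u \<tau> - x))\<^sup>2
     \<le> \<eta> * (\<Sum>t<\<tau>. w t) * (- (G \<bullet> g x) + 4 * (L * \<eta> * wm * real \<tau>) * (norm G)\<^sup>2
          + (L * \<eta> * wm * real \<tau>) * (norm (g x))\<^sup>2)"
proof -
  define c where "c = L * \<eta> * wm * real \<tau>"
  define W where "W = \<eta> * (\<Sum>t<\<tau>. w t)"
  define a where "a = norm (g x)"
  define d where "d = (u \<tau> - x) + W *\<^sub>R g x"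
  have c: "0 \<le> c" "c \<le> 1/16"
    using drift_factor_mono[of \<tau>] small_steps unfolding c_def by auto
  have W: "0 \<le> W"
    using weights eta_nonneg unfolding W_def by (intro mult_nonneg_nonneg sum_nonneg) auto
  have LW: "L * W \<le> c"
  proof -
    have "(\<Sum>t<\<tau>. w t) \<le> real \<tau> * wm"
      using sum_bounded_above[of "{..<\<tau>}" w wm] weights by auto
    then have "L * \<eta> * (\<Sum>t<\<tau>. w t) \<le> L * \<eta> * (real \<tau> * wm)"
      using L_nonneg eta_nonneg by (intro mult_left_mono) auto
    then show ?thesis unfolding W_def c_def by (simp add: mult_ac)
  qed
  have d: "norm d \<le> 2 * c * a * W"
    using displacement unfolding d_def c_def a_def W_def .
  have inner_part: "G \<bullet> (u \<tau> - x) \<le> - W * (G \<bullet> g x) + W * (norm G * (2 * c * a))"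
  proof -
    have "G \<bullet> (u \<tau> - x) = - W * (G \<bullet> g x) + G \<bullet> d"
      by (simp add: d_def inner_add_right)
    also have "G \<bullet> d \<le> norm G * (2 * c * a * W)"
      using norm_cauchy_schwarz[of G d] d by (meson mult_left_mono norm_ge_zero order_trans)
    finally show ?thesis by (simp add: mult_ac)
  qed
  have norm_part: "L / 2 * (norm (u \<tau> - x))\<^sup>2 \<le> W * (c / 2 * (81/64) * a\<^sup>2)"
  proof -
    have "norm (u \<tau> - x) \<le> norm d + W * a"
      using norm_triangle_ineq4[of d "W *\<^sub>R g x"] W unfolding d_def a_def by simp
    also have "\<dots> \<le> W * (1 + 2 * c) * a"
      using d by (simp add: algebra_simps)
    finally have "(norm (u \<tau> - x))\<^sup>2 \<le> (W * (1 + 2 * c) * a)\<^sup>2"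
      by (intro power_mono) auto
    then have "L / 2 * (norm (u \<tau> - x))\<^sup>2 \<le> L / 2 * (W * (1 + 2 * c) * a)\<^sup>2"
      using L_nonneg by (intro mult_left_mono) auto
    also have "\<dots> = W * ((L * W) / 2 * (1 + 2 * c)\<^sup>2 * a\<^sup>2)"
      by (simp add: power2_eq_square mult_ac)
    also have "\<dots> \<le> W * (c / 2 * (81/64) * a\<^sup>2)"
    proof (intro mult_left_mono W mult_right_mono)
      have "(1 + 2 * c)\<^sup>2 \<le> (9/8)\<^sup>2" using c by (intro power_mono) auto
      then show "(L * W) / 2 * (1 + 2 * c)\<^sup>2 \<le> c / 2 * (81/64)"
        using LW L_nonneg W c by (intro mult_mono) (auto simp: power2_eq_square)
    qed simp
    finally show ?thesis .
  qed
  have young: "norm G * (2 * c * a) \<le> 4 * c * (norm G)\<^sup>2 + c / 4 * a\<^sup>2"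
    using mult_nonneg_nonneg[OF c(1) zero_le_power2[of "2 * norm G - a / 2"]]
    by (simp add: power2_eq_square algebra_simps)
  have "G \<bullet> (u \<tau> - x) + L / 2 * (norm (u \<tau> - x))\<^sup>2
      \<le> W * (- (G \<bullet> g x) + 4 * c * (norm G)\<^sup>2 + (113/128) * c * a\<^sup>2)"
    using inner_part norm_part mult_left_mono[OF young W] by (simp add: algebra_simps)
  also have "\<dots> \<le> W * (- (G \<bullet> g x) + 4 * c * (norm G)\<^sup>2 + c * a\<^sup>2)"
    using W c by (intro mult_left_mono) auto
  finally show ?thesis unfolding c_def W_def a_def .
qed

end

lemma expectation_stochastic_step:
  fixes M :: "'b pmf" and s :: "'b \<Rightarrow> 'a::euclidean_space"
  assumes fin: "finite (set_pmf M)"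
    and mean: "measure_pmf.expectation M s = G"
    and var: "measure_pmf.expectation M (\<lambda>b. (norm (G - s b))\<^sup>2) \<le> V"
    and c: "0 \<le> c" "c \<le> 1/16"
  shows "measure_pmf.expectation M (\<lambda>b. - (G \<bullet> s b) + 4 * c * (norm G)\<^sup>2 + c * (norm (s b))\<^sup>2)
           \<le> - 1/4 * (norm G)\<^sup>2 + c * V"
proof -
  note int = integrable_measure_pmf_finite[OF fin]
  have inner_mean: "measure_pmf.expectation M (\<lambda>b. G \<bullet> s b) = (norm G)\<^sup>2"
    using mean by (simp add: int power2_norm_eq_inner)
  have "(norm (s b))\<^sup>2 = (norm (G - s b))\<^sup>2 - (norm G)\<^sup>2 + 2 * (G \<bullet> s b)" for b
    by (simp add: power2_norm_eq_inner inner_diff_left inner_diff_right inner_commute)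
  then have "measure_pmf.expectation M (\<lambda>b. (norm (s b))\<^sup>2) \<le> V + (norm G)\<^sup>2"
    using var inner_mean by (simp add: int)
  then have "measure_pmf.expectation M (\<lambda>b. - (G \<bullet> s b) + 4 * c * (norm G)\<^sup>2 + c * (norm (s b))\<^sup>2)
      \<le> - (norm G)\<^sup>2 + 4 * c * (norm G)\<^sup>2 + c * (V + (norm G)\<^sup>2)"
    using inner_mean c by (simp add: int mult_left_mono)
  also have "\<dots> \<le> - 1/4 * (norm G)\<^sup>2 + c * V"
  proof -
    have "c * (norm G)\<^sup>2 \<le> 1/16 * (norm G)\<^sup>2" using c by (intro mult_right_mono) auto
    then show ?thesis
      by (simp add: distrib_left) (use zero_le_power2[of "norm G"] in linarith)
  qed
  finally show ?thesis .
qed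

context block_partition
begin

lemma flex_round_descent:
  assumes F_deriv: "\<And>x. (F has_derivative (\<lambda>h. gF x \<bullet> h)) (at x)"
    and gF_lipschitz: "\<And>x y. norm (gF x - gF y) \<le> L * norm (x - y)"
    and L_nonneg: "0 \<le> L"
    and sgrad_lip: "\<And>k y z. k \<le> K \<Longrightarrow>
          norm (sgrad Bk gl k y B - sgrad Bk gl k z B) \<le> L * norm (y - z)"
    and eta_nonneg: "\<And>k. 0 \<le> eta k r"
    and weights: "\<And>k t. t < tau k r \<Longrightarrow> 0 \<le> w k r t \<and> w k r t \<le> wm k"
    and small_steps: "\<And>k. k \<le> K \<Longrightarrow> L * eta k r * wm k * real (tau k r) \<le> 1/16"
  shows "F (flex_round K Bk gl eta w tau r B x)
     \<le> F x + (\<Sum>k\<le>K. eta k r * (\<Sum>t<tau k r. w k r t) *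
          (- (blk Bk k (gF x) \<bullet> sgrad Bk gl k x B)
           + 4 * (L * eta k r * wm k * real (tau k r)) * (norm (blk Bk k (gF x)))\<^sup>2
           + (L * eta k r * wm k * real (tau k r)) * (norm (sgrad Bk gl k x B))\<^sup>2))"
    (is "_ \<le> F x + (\<Sum>k\<le>K. ?bound k)")
proof -
  define u where "u k = local_iter Bk gl (eta k r) (w k r) k B x (tau k r)" for k
  have local: "blk Bk k (gF x) \<bullet> (u k - x) + L / 2 * (norm (u k - x))\<^sup>2 \<le> ?bound k"
    if k: "k \<le> K" for k
  proof -
    interpret local_iteration "\<lambda>y. sgrad Bk gl k y B" L "eta k r" "wm k" "w k r" "tau k r" x
      "local_iter Bk gl (eta k r) (w k r) k B x"
      using sgrad_lip[OF k] L_nonneg eta_nonneg weights small_steps[OF k]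
      by unfold_locales auto
    show ?thesis unfolding u_def by (rule local_descent)
  qed
  have "F (flex_round K Bk gl eta w tau r B x)
      \<le> F x + gF x \<bullet> ((\<Sum>k\<le>K. blk Bk k (u k)) - x) + L / 2 * (norm ((\<Sum>k\<le>K. blk Bk k (u k)) - x))\<^sup>2"
    unfolding flex_round_def u_def by (rule descent_lemma[OF F_deriv gF_lipschitz])
  also have "\<dots> \<le> F x + (\<Sum>k\<le>K. blk Bk k (gF x) \<bullet> (u k - x)) + L / 2 * (\<Sum>k\<le>K. (norm (u k - x))\<^sup>2)"
    unfolding inner_blockwise_step using norm_blockwise_step_le L_nonneg by (simp add: mult_left_mono)
  also have "\<dots> = F x + (\<Sum>k\<le>K. blk Bk k (gF x) \<bullet> (u k - x) + L / 2 * (norm (u k - x))\<^sup>2)"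
    by (simp add: sum.distrib sum_distrib_left)
  also have "\<dots> \<le> F x + (\<Sum>k\<le>K. ?bound k)"
    using local by (intro add_left_mono sum_mono) auto
  finally show ?thesis .
qed

lemma flex_round_expected_descent:
  assumes F_deriv: "\<And>x. (F has_derivative (\<lambda>h. gF x \<bullet> h)) (at x)"
    and gF_lipschitz: "\<And>x y. norm (gF x - gF y) \<le> L * norm (x - y)"
    and L_nonneg: "0 \<le> L"
    and finite_D: "finite (set_pmf D)"
    and sgrad_lip: "\<And>B k y z. B \<in> set_pmf D \<Longrightarrow> k \<le> K \<Longrightarrow>
          norm (sgrad Bk gl k y B - sgrad Bk gl k z B) \<le> L * norm (y - z)"
    and mean: "\<And>k. k \<le> K \<Longrightarrow>
          measure_pmf.expectation D (\<lambda>B. sgrad Bk gl k x B) = blk Bk k (gF x)"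
    and variance: "\<And>k. k \<le> K \<Longrightarrow>
          measure_pmf.expectation D (\<lambda>B. (norm (blk Bk k (gF x) - sgrad Bk gl k x B))\<^sup>2) \<le> V k"
    and eta_nonneg: "\<And>k. 0 \<le> eta k r"
    and weights: "\<And>k t. t < tau k r \<Longrightarrow> 0 \<le> w k r t \<and> w k r t \<le> wm k"
    and small_steps: "\<And>k. k \<le> K \<Longrightarrow> L * eta k r * wm k * real (tau k r) \<le> 1/16"
  shows "measure_pmf.expectation D (\<lambda>B. F (flex_round K Bk gl eta w tau r B x))
     \<le> F x - 1/4 * (\<Sum>k\<le>K. eta k r * (\<Sum>t<tau k r. w k r t) * (norm (blk Bk k (gF x)))\<^sup>2)
        + L * (\<Sum>k\<le>K. (eta k r)\<^sup>2 * (\<Sum>t<tau k r. w k r t) * wm k * real (tau k r) * V k)"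
proof -
  note int = integrable_measure_pmf_finite[OF finite_D]
  define c where "c k = L * eta k r * wm k * real (tau k r)" for k
  define Q where "Q k B = - (blk Bk k (gF x) \<bullet> sgrad Bk gl k x B)
      + 4 * c k * (norm (blk Bk k (gF x)))\<^sup>2 + c k * (norm (sgrad Bk gl k x B))\<^sup>2" for k B
  have EQ: "eta k r * (\<Sum>t<tau k r. w k r t) * measure_pmf.expectation D (Q k)
      \<le> eta k r * (\<Sum>t<tau k r. w k r t) * (- 1/4 * (norm (blk Bk k (gF x)))\<^sup>2 + c k * V k)"
    if k: "k \<le> K" for k
  proof (rule mult_left_mono)
    show "measure_pmf.expectation D (Q k) \<le> - 1/4 * (norm (blk Bk k (gF x)))\<^sup>2 + c k * V k"
      unfolding Q_def using finite_D mean[OF k] variance[OF k]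
    proof (rule expectation_stochastic_step)
      show "0 \<le> c k"
      proof (cases "tau k r = 0")
        case False
        then show ?thesis unfolding c_def using weights[of 0 k] L_nonneg eta_nonneg by simp
      qed (simp add: c_def)
      show "c k \<le> 1/16" unfolding c_def using small_steps[OF k] .
    qed
    show "0 \<le> eta k r * (\<Sum>t<tau k r. w k r t)"
      using eta_nonneg weights by (intro mult_nonneg_nonneg sum_nonneg) auto
  qed
  have "measure_pmf.expectation D (\<lambda>B. F (flex_round K Bk gl eta w tau r B x))
      \<le> measure_pmf.expectation D (\<lambda>B. F x + (\<Sum>k\<le>K. eta k r * (\<Sum>t<tau k r. w k r t) * Q k B))"
    unfolding Q_def c_def
    by (intro integral_mono_AE int AE_pmfI flex_round_descent[OF F_deriv gF_lipschitz L_nonneg]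
        sgrad_lip eta_nonneg weights small_steps)
  also have "\<dots> = F x + (\<Sum>k\<le>K. eta k r * (\<Sum>t<tau k r. w k r t) * measure_pmf.expectation D (Q k))"
    by (simp add: int)
  also have "\<dots> \<le> F x + (\<Sum>k\<le>K. eta k r * (\<Sum>t<tau k r. w k r t) * (- 1/4 * (norm (blk Bk k (gF x)))\<^sup>2 + c k * V k))"
    using EQ by (intro add_left_mono sum_mono) auto
  also have "\<dots> = F x - 1/4 * (\<Sum>k\<le>K. eta k r * (\<Sum>t<tau k r. w k r t) * (norm (blk Bk k (gF x)))\<^sup>2)
        + L * (\<Sum>k\<le>K. (eta k r)\<^sup>2 * (\<Sum>t<tau k r. w k r t) * wm k * real (tau k r) * V k)"
    unfolding c_def
    by (simp add: sum.distrib sum_distrib_left sum_subtractf sum_divide_distrib power2_eq_square algebra_simps)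
  finally show ?thesis .
qed

end

lemma expectation_finite_support:
  fixes f :: "'a \<Rightarrow> real"
  assumes "finite (set_pmf M)"
  shows "measure_pmf.expectation M f = (\<Sum>a\<in>set_pmf M. pmf M a * f a)"
  using integral_measure_pmf_real[OF assms, of M f] by (simp add: mult.commute)

lemma expectation_pair_pmf_finite:
  fixes f :: "'a \<times> 'b \<Rightarrow> real"
  assumes "finite (set_pmf M)" "finite (set_pmf N)"
  shows "measure_pmf.expectation (pair_pmf M N) f
       = measure_pmf.expectation M (\<lambda>a. measure_pmf.expectation N (\<lambda>b. f (a, b)))"
proof -
  have "measure_pmf.expectation (pair_pmf M N) f
      = (\<Sum>p\<in>set_pmf M \<times> set_pmf N. pmf (pair_pmf M N) p * f p)"
    using assms by (simp add: expectation_finite_support)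
  also have "\<dots> = (\<Sum>a\<in>set_pmf M. \<Sum>b\<in>set_pmf N. pmf M a * (pmf N b * f (a, b)))"
    by (subst sum.cartesian_product) (auto simp: pmf_pair mult.assoc intro!: sum.cong)
  finally show ?thesis
    using assms by (simp add: expectation_finite_support sum_distrib_left)
qed

lemma expectation_swap_finite:
  fixes f :: "'a \<Rightarrow> 'b \<Rightarrow> real"
  assumes "finite (set_pmf M)" "finite (set_pmf N)"
  shows "measure_pmf.expectation M (\<lambda>a. measure_pmf.expectation N (\<lambda>b. f a b))
       = measure_pmf.expectation N (\<lambda>b. measure_pmf.expectation M (\<lambda>a. f a b))"
  using assms by (simp add: expectation_finite_support sum_distrib_left mult.left_commute
      sum.swap[of _ "set_pmf M"])

lemma expectation_Pi_pmf_integrate_component: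
  fixes h :: "'z \<Rightarrow> 'b \<Rightarrow> real" and \<phi> :: "('i \<Rightarrow> 'b) \<Rightarrow> 'z"
  assumes "finite A" "r \<in> A" and finite_D: "\<And>j. finite (set_pmf (D j))"
    and independent: "\<And>bs y. \<phi> (bs(r := y)) = \<phi> bs"
  shows "measure_pmf.expectation (Pi_pmf A dflt D) (\<lambda>bs. h (\<phi> bs) (bs r))
       = measure_pmf.expectation (Pi_pmf A dflt D) (\<lambda>bs. measure_pmf.expectation (D r) (h (\<phi> bs)))"
proof -
  define A' where "A' = A - {r}"
  have "finite A'" "r \<notin> A'" using assms unfolding A'_def by auto
  then have P: "Pi_pmf A dflt D = map_pmf (\<lambda>(y, f). f(r := y)) (pair_pmf (D r) (Pi_pmf A' dflt D))"
    using assms Pi_pmf_insert[of A' r dflt D] unfolding A'_def by (simp add: insert_absorb)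
  have finite_P: "finite (set_pmf (Pi_pmf A' dflt D))"
    using \<open>finite A'\<close> finite_D by (simp add: set_Pi_pmf finite_PiE_dflt)
  have "measure_pmf.expectation (Pi_pmf A dflt D) (\<lambda>bs. h (\<phi> bs) (bs r))
      = measure_pmf.expectation (D r) (\<lambda>y. measure_pmf.expectation (Pi_pmf A' dflt D) (\<lambda>f. h (\<phi> f) y))"
    by (simp add: P expectation_pair_pmf_finite[OF finite_D finite_P] independent)
  also have "\<dots> = measure_pmf.expectation (Pi_pmf A' dflt D) (\<lambda>f. measure_pmf.expectation (D r) (h (\<phi> f)))"
    by (rule expectation_swap_finite[OF finite_D finite_P])
  also have "\<dots> = measure_pmf.expectation (Pi_pmf A dflt D) (\<lambda>bs. measure_pmf.expectation (D r) (h (\<phi> bs)))"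
    by (simp add: P expectation_pair_pmf_finite[OF finite_D finite_P] independent)
  finally show ?thesis .
qed

lemma flex_iter_cong:
  "(\<And>j. j < r \<Longrightarrow> bs j = bs' j) \<Longrightarrow>
     flex_iter K Bk gl eta w tau x0 bs r = flex_iter K Bk gl eta w tau x0 bs' r"
  by (induction r) auto

lemma flex_iter_expected_descent:
  fixes F :: "'p::euclidean_space \<Rightarrow> real"
  assumes finite_D: "\<And>r. finite (set_pmf (D r))"
    and round: "\<And>r x.
          measure_pmf.expectation (D r) (\<lambda>B. F (flex_round K Bk gl eta w tau r B x)) \<le> F x - a r x + b r"
    and lower: "\<And>x. Finf \<le> F x"
  shows "(\<Sum>r<R. measure_pmf.expectation (Pi_pmf {..<R} dflt D)
            (\<lambda>bs. a r (flex_iter K Bk gl eta w tau x0 bs r)))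
         \<le> F x0 - Finf + (\<Sum>r<R. b r)"
proof -
  define P where "P = Pi_pmf {..<R} dflt D"
  define it where "it r bs = flex_iter K Bk gl eta w tau x0 bs r" for r bs
  define \<Phi> where "\<Phi> r = measure_pmf.expectation P (\<lambda>bs. F (it r bs))" for r
  have finite_P: "finite (set_pmf P)"
    unfolding P_def using finite_D by (simp add: set_Pi_pmf finite_PiE_dflt)
  note int = integrable_measure_pmf_finite[OF finite_P]
  have step: "\<Phi> (Suc r) \<le> \<Phi> r - measure_pmf.expectation P (a r \<circ> it r) + b r" if r: "r < R" for r
  proof -
    have "\<Phi> (Suc r) = measure_pmf.expectation P (\<lambda>bs. F (flex_round K Bk gl eta w tau r (bs r) (it r bs)))"
      unfolding \<Phi>_def it_def by simp
    also have "\<dots> = measure_pmf.expectation P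
          (\<lambda>bs. measure_pmf.expectation (D r) (\<lambda>B. F (flex_round K Bk gl eta w tau r B (it r bs))))"
      unfolding P_def
      by (rule expectation_Pi_pmf_integrate_component[where \<phi> = "it r"
            and h = "\<lambda>z B. F (flex_round K Bk gl eta w tau r B z)"])
        (use r finite_D in \<open>auto simp: it_def intro: flex_iter_cong\<close>)
    also have "\<dots> \<le> measure_pmf.expectation P (\<lambda>bs. F (it r bs) - a r (it r bs) + b r)"
      by (intro integral_mono int round)
    also have "\<dots> = \<Phi> r - measure_pmf.expectation P (a r \<circ> it r) + b r"
      unfolding \<Phi>_def by (simp add: int o_def)
    finally show ?thesis .
  qed
  have "(\<Sum>r<R. measure_pmf.expectation P (a r \<circ> it r)) \<le> (\<Sum>r<R. \<Phi> r - \<Phi> (Suc r) + b r)"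
    using step by (intro sum_mono) fastforce
  also have "\<dots> = \<Phi> 0 - \<Phi> R + (\<Sum>r<R. b r)"
    by (simp add: sum.distrib sum_lessThan_telescope')
  also have "\<Phi> 0 = F x0" unfolding \<Phi>_def it_def by simp
  also have "F x0 - \<Phi> R + (\<Sum>r<R. b r) \<le> F x0 - Finf + (\<Sum>r<R. b r)"
  proof -
    have "measure_pmf.expectation P (\<lambda>_. Finf) \<le> \<Phi> R"
      unfolding \<Phi>_def using lower by (intro integral_mono int)
    then show ?thesis by simp
  qed
  finally show ?thesis unfolding P_def it_def o_def by simp
qed

lemma step_size_rule_small_steps:
  fixes L L' \<eta> wm :: real
  assumes "0 \<le> \<eta>" "0 \<le> wm" "\<eta> * (16 * real \<tau> * max L L' * wm) \<le> 1"
  shows "L * \<eta> * wm * real \<tau> \<le> 1/16"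
proof -
  have "0 \<le> \<eta> * real \<tau> * wm" using assms(1,2) by simp
  from mult_left_mono[OF max.cobounded1[of L L'] this]
  have "L * \<eta> * wm * real \<tau> \<le> \<eta> * (16 * real \<tau> * max L L' * wm) / 16"
    by (simp add: mult_ac)
  with assms(3) show ?thesis by linarith
qed

lemma weighted_step_sum_pos:
  fixes eta :: "nat \<Rightarrow> nat \<Rightarrow> real" and w :: "nat \<Rightarrow> nat \<Rightarrow> nat \<Rightarrow> real"
    and tau :: "nat \<Rightarrow> nat \<Rightarrow> nat"
  assumes "\<forall>k r. 0 < eta k r" "\<forall>k r t. 1 \<le> w k r t" "\<forall>k r. 1 \<le> tau k r" "1 \<le> R"
  shows "0 < (\<Sum>r<R. \<Sum>k\<le>K. eta k r * (\<Sum>t<tau k r. w k r t))"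
proof -
  have "0 < (\<Sum>t<tau k r. w k r t)" for k r
  proof (rule sum_pos)
    have "0 \<in> {..<tau k r}" using assms(3)[rule_format, of k r] by simp
    then show "{..<tau k r} \<noteq> {}" by blast
    show "0 < w k r t" for t using assms(2)[rule_format, of k r t] by linarith
  qed simp
  then have "0 < eta k r * (\<Sum>t<tau k r. w k r t)" for k r
    using assms(1) by simp
  moreover have "0 \<in> {..<R}" using assms(4) by simp
  ultimately show ?thesis by (intro sum_pos) blast+
qed

theorem theorem1:
  fixes K N R :: nat
    and Bk :: "nat \<Rightarrow> 'p::euclidean_space set"
    and l :: "nat \<Rightarrow> 'p \<Rightarrow> real"
    and gl :: "nat \<Rightarrow> 'p \<Rightarrow> 'p"
    and L Finf :: real
    and Lb \<sigma> :: "nat \<Rightarrow> real"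
    and D :: "nat \<Rightarrow> nat set pmf"
    and tau :: "nat \<Rightarrow> nat \<Rightarrow> nat"
    and eta :: "nat \<Rightarrow> nat \<Rightarrow> real"
    and w :: "nat \<Rightarrow> nat \<Rightarrow> nat \<Rightarrow> real"
    and x0 :: 'p
  defines "F \<equiv> (\<lambda>x. (\<Sum>i=1..N. l i x) / real N)"
    and "gF \<equiv> (\<lambda>x. (1 / real N) *\<^sub>R (\<Sum>i=1..N. gl i x))"
    and "wmax \<equiv> (\<lambda>k r. MAX t\<in>{..<tau k r}. w k r t)"
    and "W \<equiv> (\<lambda>k r. \<Sum>t<tau k r. w k r t)"
    and "S \<equiv> (\<Sum>r<R. \<Sum>k\<le>K. eta k r * (\<Sum>t<tau k r. w k r t))"
  assumes blocks_disj: "\<forall>k\<le>K. \<forall>j\<le>K. k \<noteq> j \<longrightarrow> Bk k \<inter> Bk j = {}"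
    and blocks_cover: "(\<Union>k\<le>K. Bk k) = Basis"
    and grad: "\<forall>i\<in>{1..N}. \<forall>x. (l i has_derivative (\<lambda>h. gl i x \<bullet> h)) (at x)"
    and A1: "\<forall>i\<in>{1..N}. \<forall>x y. norm (gl i x - gl i y) \<le> L * norm (x - y)"
    and A1k: "\<forall>i\<in>{1..N}. \<forall>k\<le>K. \<forall>x y.
                 norm (blk Bk k (gl i x) - blk Bk k (gl i y)) \<le> Lb k * norm (x - y)"
    and batches: "\<forall>r. set_pmf (D r) \<subseteq> {B. B \<subseteq> {1..N} \<and> B \<noteq> {}}"
    and A2: "\<forall>r. \<forall>k\<le>K. \<forall>x.
               measure_pmf.expectation (D r) (\<lambda>B. sgrad Bk gl k x B) = blk Bk k (gF x)"
    and A3: "\<forall>r. \<forall>k\<le>K. \<forall>x.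
               measure_pmf.expectation (D r) (\<lambda>B. (norm (blk Bk k (gF x) - sgrad Bk gl k x B))\<^sup>2)
                 \<le> (\<sigma> k)\<^sup>2"
    and lower: "\<forall>x. Finf \<le> F x"
    and tau_pos: "\<forall>k r. 1 \<le> tau k r"
    and eta_pos: "\<forall>k r. 0 < eta k r"
    and w_ge: "\<forall>k r t. 1 \<le> w k r t"
    and step: "\<forall>r. \<forall>k\<le>K. eta k r * (16 * real (tau k r) * max L (Lb k) * wmax k r) \<le> 1"
    and R_pos: "1 \<le> R"
  shows "(1 / S) * (\<Sum>r<R. \<Sum>k\<le>K. eta k r * W k r *
            measure_pmf.expectation (Pi_pmf {..<R} {} D)
              (\<lambda>bs. (norm (blk Bk k (gF (flex_iter K Bk gl eta w tau x0 bs r))))\<^sup>2))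
         \<le> (4 / S) * (F x0 - Finf)
           + (4 * L / S) * (\<Sum>r<R. \<Sum>k\<le>K. (eta k r)\<^sup>2 * W k r * wmax k r * real (tau k r) * (\<sigma> k)\<^sup>2)"
proof -
  interpret block_partition K Bk using blocks_disj blocks_cover by unfold_locales
  have finite_D: "finite (set_pmf (D r))" for r
  proof (rule finite_subset)
    show "set_pmf (D r) \<subseteq> Pow {1..N}" using batches by blast
  qed simp
  obtain i where i: "i \<in> {1..N}"
  proof -
    obtain B where "B \<in> set_pmf (D 0)" using set_pmf_not_empty by fast
    then show ?thesis using that batches by blast
  qed
  have L_nonneg: "0 \<le> L"
    using A1 i by (intro lipschitz_constant_nonneg[of "gl i"]) blast
  have F_deriv: "(F has_derivative (\<lambda>h. gF x \<bullet> h)) (at x)" for x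
    unfolding F_def gF_def by (rule average_has_derivative) (use grad in auto)
  have gF_lipschitz: "norm (gF x - gF y) \<le> L * norm (x - y)" for x y
    using average_lipschitz[of "{1..N}" gl L x y] A1 i unfolding gF_def by auto
  have sgrad_lip: "norm (sgrad Bk gl k x B - sgrad Bk gl k y B) \<le> L * norm (x - y)"
    if "B \<in> set_pmf (D r)" "k \<le> K" for B r k x y
  proof -
    have "B \<subseteq> {1..N}" "B \<noteq> {}" using that batches by auto
    then show ?thesis
      using A1 block_subset_Basis[OF that(2)] by (intro sgrad_lipschitz) (auto intro: finite_subset)
  qed
  have weights: "0 \<le> w k r t \<and> w k r t \<le> wmax k r" if "t < tau k r" for k r t
    using w_ge that unfolding wmax_def by (auto intro: order_trans[OF zero_le_one])
  have small_steps: "L * eta k r * wmax k r * real (tau k r) \<le> 1/16" if "k \<le> K" for k r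
  proof (rule step_size_rule_small_steps[where L' = "Lb k"])
    show "0 \<le> eta k r" using eta_pos less_imp_le by blast
    show "0 \<le> wmax k r" using weights[of 0 k r] tau_pos[rule_format, of k r] by linarith
  qed (use step that in blast)
  have round: "measure_pmf.expectation (D r) (\<lambda>B. F (flex_round K Bk gl eta w tau r B x))
     \<le> F x - 1/4 * (\<Sum>k\<le>K. eta k r * W k r * (norm (blk Bk k (gF x)))\<^sup>2)
        + L * (\<Sum>k\<le>K. (eta k r)\<^sup>2 * W k r * wmax k r * real (tau k r) * (\<sigma> k)\<^sup>2)" for r x
    unfolding W_def
    using A2 A3 eta_pos weights small_steps
    by (intro flex_round_expected_descent[OF F_deriv gF_lipschitz L_nonneg finite_D sgrad_lip])
      (auto simp: less_imp_le)
  define T where "T = (\<Sum>r<R. \<Sum>k\<le>K. eta k r * W k r *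
      measure_pmf.expectation (Pi_pmf {..<R} {} D)
        (\<lambda>bs. (norm (blk Bk k (gF (flex_iter K Bk gl eta w tau x0 bs r))))\<^sup>2))"
  define noise where
    "noise = (\<Sum>r<R. \<Sum>k\<le>K. (eta k r)\<^sup>2 * W k r * wmax k r * real (tau k r) * (\<sigma> k)\<^sup>2)"
  have "T / 4 \<le> F x0 - Finf + L * noise"
    using flex_iter_expected_descent[OF finite_D round lower[rule_format], of R "{}" x0]
    unfolding T_def noise_def
    by (simp add: integrable_measure_pmf_finite finite_D set_Pi_pmf finite_PiE_dflt
        sum_divide_distrib sum_distrib_left)
  moreover have "0 < S"
    unfolding S_def using eta_pos w_ge tau_pos R_pos by (rule weighted_step_sum_pos)
  ultimately show ?thesis
    unfolding T_def[symmetric] noise_def[symmetric] by (simp add: field_simps)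
qed

end
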